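(* Let $p$ be a prime, let $c,d$ be positive integers, let $X$ be a set with $d$ elements, let $L_c(X)$ be the free nilpotent $\mathbb{Z}_p$-Lie algebra of class $c$ on $X$, regarded inside $\widetilde{L}_c(X)=L_c(X)\otimes_{\mathbb{Z}_p}\mathbb{Q}_p$, and let $$\widehat{L}_c(X)=L_c(X)+\tfrac{1}{p}\gamma_2(L_c(X))+\dots+\tfrac{1}{p^{c-1}}\gamma_c(L_c(X)).$$ Let $I$ be an ideal of $L_c(X)$ of finite index and set $$\widehat{I}=I+\tfrac{1}{p}[I,L_c(X)]+\tfrac{1}{p^2}[I,{}_2L_c(X)]+\dots+\tfrac{1}{p^{c-1}}[I,{}_{c-1}L_c(X)]\subseteq\widetilde{L}_c(X).$$ Then $[\widehat{I},\widehat{L}_c(X)]\subseteq p\widehat{I}$; in particular $\widehat{I}$ is an ideal of $\widehat{L}_c(X)$.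
   Context: $L_c(X)$ is the free $\mathbb{Z}_p$-Lie algebra on $X$ modulo the $(c+1)$-st term of its lower central series; $\gamma_1(L)=L$, $\gamma_{i+1}(L)=[\gamma_i(L),L]$; $[I,{}_iL]=[\cdots[[I,L],L],\dots,L]$ with $i$ copies of $L$. Brackets of subsets denote $\mathbb{Z}_p$-spans of brackets. *)

theory Defs
  imports "Berlekamp_Zassenhaus.Finite_Field" "HOL-Computational_Algebra.Fraction_Field"
begin

section \<open>The p-adic integers Z_p (inverse limit of Z/p^n Z) and Q_p = Frac(Z_p)\<close>

text \<open>A p-adic integer is a compatible sequence (f n) with f n in Z/p^n Z, represented by
  its least nonnegative residue. The prime p is CARD('p) for a type 'p of class prime_card.\<close>

definition padic_seqs :: "int \<Rightarrow> (nat \<Rightarrow> int) set" where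
  "padic_seqs P = {f. \<forall>n. f n = f (Suc n) mod P ^ n}"

lemma padic_seqs_reduced:
  assumes "f \<in> padic_seqs P" shows "f n mod P ^ n = f n"
proof -
  have "f n = f (Suc n) mod P ^ n" using assms unfolding padic_seqs_def by blast
  then show ?thesis by simp
qed

lemma padic_seqs_closed:
  assumes "f \<in> padic_seqs P" "g \<in> padic_seqs P"
    and F: "\<And>a b m. F a b mod m = F (a mod m) (b mod m) mod m"
  shows "(\<lambda>n. F (f n) (g n) mod P ^ n) \<in> padic_seqs P"
  unfolding padic_seqs_def
proof (intro CollectI allI)
  fix n
  have d: "P ^ n dvd P ^ Suc n" by simp
  have fn: "f n = f (Suc n) mod P ^ n" "g n = g (Suc n) mod P ^ n"
    using assms unfolding padic_seqs_def by blast+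
  have "F (f (Suc n)) (g (Suc n)) mod P ^ Suc n mod P ^ n = F (f (Suc n)) (g (Suc n)) mod P ^ n"
    using d by (rule mod_mod_cancel)
  also have "\<dots> = F (f n) (g n) mod P ^ n" using F[of "f (Suc n)" "g (Suc n)" "P ^ n"] F[of "f n" "g n" "P ^ n"] fn
    by simp
  finally show "F (f n) (g n) mod P ^ n = F (f (Suc n)) (g (Suc n)) mod P ^ Suc n mod P ^ n" by simp
qed

lemma padic_seqs_zero: "(\<lambda>_. 0) \<in> padic_seqs P"
  by (simp add: padic_seqs_def)

typedef ('p::prime_card) padic_int = "padic_seqs (int CARD('p))"
  using padic_seqs_zero by blast

setup_lifting type_definition_padic_int

instantiation padic_int :: (prime_card) comm_ring_1
begin

lift_definition zero_padic_int :: "'a padic_int" is "\<lambda>_. 0" by (rule padic_seqs_zero)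

lift_definition one_padic_int :: "'a padic_int" is "\<lambda>n. 1 mod (int CARD('a)) ^ n"
  using padic_seqs_closed[OF padic_seqs_zero padic_seqs_zero, of "\<lambda>a b. 1"] by simp

lift_definition plus_padic_int :: "'a padic_int \<Rightarrow> 'a padic_int \<Rightarrow> 'a padic_int"
  is "\<lambda>f g n. (f n + g n) mod (int CARD('a)) ^ n"
  by (rule padic_seqs_closed[where F="(+)"]) (simp_all add: mod_simps)

lift_definition minus_padic_int :: "'a padic_int \<Rightarrow> 'a padic_int \<Rightarrow> 'a padic_int"
  is "\<lambda>f g n. (f n - g n) mod (int CARD('a)) ^ n"
  by (rule padic_seqs_closed[where F="(-)"]) (simp_all add: mod_simps)

lift_definition uminus_padic_int :: "'a padic_int \<Rightarrow> 'a padic_int"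
  is "\<lambda>f n. (- f n) mod (int CARD('a)) ^ n"
  by (rule padic_seqs_closed[where F="\<lambda>a b. - a" and g="\<lambda>_. 0"]) (simp_all add: mod_simps padic_seqs_zero)

lift_definition times_padic_int :: "'a padic_int \<Rightarrow> 'a padic_int \<Rightarrow> 'a padic_int"
  is "\<lambda>f g n. (f n * g n) mod (int CARD('a)) ^ n"
  by (rule padic_seqs_closed[where F="(*)"]) (simp_all add: mod_simps)

instance
proof
  fix a b c :: "'a padic_int"
  show "a + b + c = a + (b + c)"
    by transfer (simp add: mod_simps ac_simps)
  show "a + b = b + a" by transfer (simp add: ac_simps)
  show "0 + a = a" by transfer (simp add: padic_seqs_reduced)
  show "- a + a = 0" by transfer (simp add: mod_simps)
  show "a - b = a + - b" by transfer (simp add: mod_simps)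
  show "a * b * c = a * (b * c)" by transfer (simp add: mod_simps ac_simps)
  show "a * b = b * a" by transfer (simp add: ac_simps)
  show "1 * a = a" by transfer (simp add: mod_simps padic_seqs_reduced)
  show "(a + b) * c = a * c + b * c" by transfer (simp add: mod_simps algebra_simps)
  show "(0::'a padic_int) \<noteq> 1"
  proof transfer
    have "1 < int CARD('a)" using nontriv by simp
    then have "(1::int) mod int CARD('a) ^ 1 = 1" by simp
    then show "(\<lambda>_. 0::int) \<noteq> (\<lambda>n. 1 mod int CARD('a) ^ n)" by (metis zero_neq_one)
  qed
qed

end

lemma padic_seqs_high:
  assumes "f \<in> padic_seqs P" "n \<le> m" shows "f m mod P ^ n = f n"
  using assms(2)
proof (induction m rule: dec_induct)
  case base then show ?case using padic_seqs_reduced[OF assms(1)] .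
next
  case (step m)
  have "f m = f (Suc m) mod P ^ m" using assms(1) unfolding padic_seqs_def by blast
  moreover have "P ^ n dvd P ^ m" using step.hyps by (simp add: le_imp_power_dvd)
  ultimately have "f (Suc m) mod P ^ n = f m mod P ^ n" by (simp add: mod_mod_cancel)
  then show ?case using step.IH by simp
qed

lemma padic_seqs_valuation:
  assumes "f \<in> padic_seqs P" "f \<noteq> (\<lambda>_. 0)"
  obtains r where "\<And>m. r \<le> m \<Longrightarrow> P ^ r dvd f m"
    "\<And>m. r < m \<Longrightarrow> \<not> P ^ Suc r dvd f m"
proof -
  have f0: "f 0 = 0" using padic_seqs_reduced[OF assms(1), of 0] by simp
  obtain k where k: "f k \<noteq> 0" using assms(2) by auto
  define r where "r = (LEAST r. f (Suc r) \<noteq> 0)"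
  have k0: "k \<noteq> 0" using k f0 by (cases k) auto
  have ex: "f (Suc (k - 1)) \<noteq> 0" using k k0 by simp
  have r1: "f (Suc r) \<noteq> 0" unfolding r_def by (rule LeastI[where P="\<lambda>r. f (Suc r) \<noteq> 0", OF ex])
  have r0: "f r = 0"
  proof (cases r)
    case 0 then show ?thesis using f0 by simp
  next
    case (Suc r')
    have "r' < r" using Suc by simp
    then have "\<not> f (Suc r') \<noteq> 0"
      unfolding r_def by (rule not_less_Least[where P="\<lambda>r. f (Suc r) \<noteq> 0"])
    then show ?thesis using Suc by simp
  qed
  show ?thesis
  proof
    fix m assume "r \<le> m"
    then have "f m mod P ^ r = 0" using padic_seqs_high[OF assms(1)] r0 by simp
    then show "P ^ r dvd f m" by (simp add: dvd_eq_mod_eq_0)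
  next
    fix m assume "r < m"
    then have "f m mod P ^ Suc r = f (Suc r)" using padic_seqs_high[OF assms(1), of "Suc r" m] by (simp del: power_Suc)
    then show "\<not> P ^ Suc r dvd f m" using r1 by (auto simp: dvd_eq_mod_eq_0)
  qed
qed

lemma padic_seqs_no_zero_divisors:
  assumes P: "prime P" and f: "f \<in> padic_seqs P" "f \<noteq> (\<lambda>_. 0)"
    and g: "g \<in> padic_seqs P" "g \<noteq> (\<lambda>_. 0)"
  shows "(\<lambda>n. (f n * g n) mod P ^ n) \<noteq> (\<lambda>_. 0)"
proof
  assume h: "(\<lambda>n. (f n * g n) mod P ^ n) = (\<lambda>_. 0)"
  obtain r where r1: "\<And>m. r \<le> m \<Longrightarrow> P ^ r dvd f m"
    and r2: "\<And>m. r < m \<Longrightarrow> \<not> P ^ Suc r dvd f m"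
    using padic_seqs_valuation[OF f] by blast
  obtain s where s1: "\<And>m. s \<le> m \<Longrightarrow> P ^ s dvd g m"
    and s2: "\<And>m. s < m \<Longrightarrow> \<not> P ^ Suc s dvd g m"
    using padic_seqs_valuation[OF g] by blast
  define m where "m = Suc (r + s)"
  obtain u where u: "f m = P ^ r * u" using r1[of m] unfolding m_def by (auto elim: dvdE)
  obtain w where w: "g m = P ^ s * w" using s1[of m] unfolding m_def by (auto elim: dvdE)
  have Pnz: "P \<noteq> 0" using P by auto
  have nu: "\<not> P dvd u"
  proof
    assume "P dvd u"
    then have "P ^ Suc r dvd f m" using u by (simp add: mult_dvd_mono)
    then show False using r2[of m] unfolding m_def by simp
  qed
  have nw: "\<not> P dvd w"
  proof
    assume "P dvd w"
    then have "P ^ Suc s dvd g m" using w by (simp add: mult_dvd_mono)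
    then show False using s2[of m] unfolding m_def by simp
  qed
  have "(f m * g m) mod P ^ m = 0" using h by (metis (mono_tags))
  then have d: "P ^ m dvd f m * g m" by (simp only: dvd_eq_mod_eq_0)
  have e1: "P ^ m = P ^ (r + s) * P" unfolding m_def by simp
  have e2: "f m * g m = P ^ (r + s) * (u * w)" unfolding u w by (simp only: power_add ac_simps)
  have "P ^ (r + s) * P dvd P ^ (r + s) * (u * w)" using d unfolding e1 e2 .
  then have "P dvd u * w" using Pnz by simp
  then show False using nu nw P by (simp add: prime_dvd_mult_iff)
qed

instance padic_int :: (prime_card) idom
proof
  fix a b :: "'a padic_int"
  assume "a \<noteq> 0" "b \<noteq> 0"
  then show "a * b \<noteq> 0"
  proof transfer
    fix f g :: "nat \<Rightarrow> int"
    assume "f \<in> padic_seqs (int CARD('a))" "g \<in> padic_seqs (int CARD('a))"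
      "f \<noteq> (\<lambda>_. 0)" "g \<noteq> (\<lambda>_. 0)"
    moreover have "prime (int CARD('a))" using prime_card by simp
    ultimately show "(\<lambda>n. (f n * g n) mod int CARD('a) ^ n) \<noteq> (\<lambda>_. 0)"
      using padic_seqs_no_zero_divisors by blast
  qed
qed

type_synonym 'p padic = "'p padic_int fract"


section \<open>The free nilpotent Z_p-Lie algebra of class c, inside its Q_p-span\<close>

text \<open>Model (Magnus/Witt embedding): L_c(X) is realised as the Z_p-Lie subring generated by X
  inside the truncated free associative Q_p-algebra on X, whose elements are coefficient functions
  on words (lists over X); products of words of length > c are truncated to 0, and the bracket is
  the commutator [u,v] = uv - vu.  The Q_p-span of this Lie ring is L_c(X) \<otimes> Q_p.\<close>

type_synonym ('p, 'x) tens = "'x list \<Rightarrow> 'p padic"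

definition prime_p :: "'p::prime_card padic" where
  "prime_p = of_nat CARD('p)"

definition tzero :: "('p::prime_card, 'x) tens" where
  "tzero = (\<lambda>_. 0)"

definition tadd :: "('p::prime_card, 'x) tens \<Rightarrow> ('p, 'x) tens \<Rightarrow> ('p, 'x) tens" where
  "tadd u v = (\<lambda>w. u w + v w)"

definition tscale :: "'p::prime_card padic \<Rightarrow> ('p, 'x) tens \<Rightarrow> ('p, 'x) tens" where
  "tscale q u = (\<lambda>w. q * u w)"

definition tgen :: "'x \<Rightarrow> ('p::prime_card, 'x) tens" where
  "tgen x = (\<lambda>w. if w = [x] then 1 else 0)"

definition tmul :: "nat \<Rightarrow> ('p::prime_card, 'x) tens \<Rightarrow> ('p, 'x) tens \<Rightarrow> ('p, 'x) tens" where
  "tmul c u v = (\<lambda>w. if length w \<le> c then (\<Sum>i\<le>length w. u (take i w) * v (drop i w)) else 0)"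

definition lie_br :: "nat \<Rightarrow> ('p::prime_card, 'x) tens \<Rightarrow> ('p, 'x) tens \<Rightarrow> ('p, 'x) tens" where
  "lie_br c u v = (\<lambda>w. tmul c u v w - tmul c v u w)"

inductive_set zp_span :: "('p::prime_card, 'x) tens set \<Rightarrow> ('p, 'x) tens set"
  for S :: "('p, 'x) tens set" where
  zero: "tzero \<in> zp_span S"
| base: "s \<in> S \<Longrightarrow> s \<in> zp_span S"
| add: "u \<in> zp_span S \<Longrightarrow> v \<in> zp_span S \<Longrightarrow> tadd u v \<in> zp_span S"
| smul: "u \<in> zp_span S \<Longrightarrow> tscale (to_fract a) u \<in> zp_span S"

inductive_set free_nil_lie :: "nat \<Rightarrow> 'x set \<Rightarrow> ('p::prime_card, 'x) tens set"
  for c :: nat and X :: "'x set" where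
  gen: "x \<in> X \<Longrightarrow> tgen x \<in> free_nil_lie c X"
| zero: "tzero \<in> free_nil_lie c X"
| add: "u \<in> free_nil_lie c X \<Longrightarrow> v \<in> free_nil_lie c X \<Longrightarrow> tadd u v \<in> free_nil_lie c X"
| smul: "u \<in> free_nil_lie c X \<Longrightarrow> tscale (to_fract a) u \<in> free_nil_lie c X"
| br: "u \<in> free_nil_lie c X \<Longrightarrow> v \<in> free_nil_lie c X \<Longrightarrow> lie_br c u v \<in> free_nil_lie c X"

definition bracket_set :: "nat \<Rightarrow> ('p::prime_card, 'x) tens set \<Rightarrow> ('p, 'x) tens set \<Rightarrow> ('p, 'x) tens set" where
  "bracket_set c A B = zp_span {lie_br c a b | a b. a \<in> A \<and> b \<in> B}"

primrec iter_bracket :: "nat \<Rightarrow> ('p::prime_card, 'x) tens set \<Rightarrow> ('p, 'x) tens set \<Rightarrow> nat \<Rightarrow> ('p, 'x) tens set" where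
  "iter_bracket c I L 0 = I"
| "iter_bracket c I L (Suc i) = bracket_set c (iter_bracket c I L i) L"

definition gamma :: "nat \<Rightarrow> ('p::prime_card, 'x) tens set \<Rightarrow> nat \<Rightarrow> ('p, 'x) tens set" where
  "gamma c L i = iter_bracket c L L (i - 1)"

definition set_add :: "('p::prime_card, 'x) tens set \<Rightarrow> ('p, 'x) tens set \<Rightarrow> ('p, 'x) tens set" where
  "set_add A B = {tadd a b | a b. a \<in> A \<and> b \<in> B}"

primrec sum_sets :: "(nat \<Rightarrow> ('p::prime_card, 'x) tens set) \<Rightarrow> nat \<Rightarrow> ('p, 'x) tens set" where
  "sum_sets F 0 = {tzero}"
| "sum_sets F (Suc n) = set_add (sum_sets F n) (F n)"

definition hat_L :: "nat \<Rightarrow> ('p::prime_card, 'x) tens set \<Rightarrow> ('p, 'x) tens set" where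
  "hat_L c L = sum_sets (\<lambda>i. tscale (inverse (prime_p ^ i)) ` gamma c L (Suc i)) c"

definition hat_ideal :: "nat \<Rightarrow> ('p::prime_card, 'x) tens set \<Rightarrow> ('p, 'x) tens set \<Rightarrow> ('p, 'x) tens set" where
  "hat_ideal c L I = sum_sets (\<lambda>i. tscale (inverse (prime_p ^ i)) ` iter_bracket c I L i) c"

definition zp_submodule :: "('p::prime_card, 'x) tens set \<Rightarrow> bool" where
  "zp_submodule S \<longleftrightarrow> tzero \<in> S \<and> (\<forall>u\<in>S. \<forall>v\<in>S. tadd u v \<in> S)
     \<and> (\<forall>a u. u \<in> S \<longrightarrow> tscale (to_fract a) u \<in> S)"

definition lie_ideal :: "nat \<Rightarrow> ('p::prime_card, 'x) tens set \<Rightarrow> ('p, 'x) tens set \<Rightarrow> bool" where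
  "lie_ideal c M I \<longleftrightarrow> I \<subseteq> M \<and> zp_submodule I \<and> bracket_set c I M \<subseteq> I"

definition finite_index :: "('p::prime_card, 'x) tens set \<Rightarrow> ('p, 'x) tens set \<Rightarrow> bool" where
  "finite_index M I \<longleftrightarrow> finite ((\<lambda>u. tadd u ` I) ` M)"

end

theory Submission
  imports Defs
begin

text \<open>Jacobi's identity and induction on j give [[I,_i L], [L,_j L]] \<subseteq> [I,_(i+j+1) L].
  Hence the bracket of p^-i [I,_i L] with p^-j \<gamma>_(j+1)(L) lies in
  p \<cdot> p^-(i+j+1) [I,_(i+j+1) L], which is a summand of p \<cdot> I-hat when i+j+1 < c. Otherwise it
  is zero: elements of [I,_k L] are supported on words of length > k, while the truncated product
  kills all words of length > c. The finiteness of X and of the index of I play no role.\<close>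

definition conv :: "('p::prime_card, 'x) tens \<Rightarrow> ('p, 'x) tens \<Rightarrow> ('p, 'x) tens" where
  "conv u v = (\<lambda>s. \<Sum>i\<le>length s. u (take i s) * v (drop i s))"

lemma conv_assoc:
  fixes u v w :: "('p::prime_card, 'x) tens"
  shows "conv (conv u v) w = conv u (conv v w)"
proof (rule ext)
  fix s :: "'x list"
  define n where "n = length s"
  define f where "f = (\<lambda>j k. u (take j s) * v (take k (drop j s)) * w (drop (j+k) s))"
  have "conv (conv u v) w s = (\<Sum>i\<le>n. \<Sum>j\<le>i. f j (i - j))"
    unfolding conv_def f_def n_def
    by (auto simp: sum_distrib_right min_def take_drop intro!: sum.cong)
  also have "\<dots> = (\<Sum>(j,k)\<in>{(j,k). j+k \<le> n}. f j k)"
    by (rule sum.triangle_reindex_eq[symmetric])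
  also have "{(j,k). j+k \<le> n} = Sigma {..n} (\<lambda>j. {..n-j})" by auto
  also have "(\<Sum>(j,k)\<in>Sigma {..n} (\<lambda>j. {..n-j}). f j k) = (\<Sum>j\<le>n. \<Sum>k\<le>n-j. f j k)"
    by (rule sum.Sigma[symmetric]) auto
  also have "\<dots> = conv u (conv v w) s"
    unfolding conv_def f_def n_def
    by (auto simp: sum_distrib_left mult.assoc add.commute intro!: sum.cong)
  finally show "conv (conv u v) w s = conv u (conv v w) s" .
qed

lemma tmul_eq_conv: "tmul c u v = (\<lambda>s. if length s \<le> c then conv u v s else 0)"
  unfolding tmul_def conv_def by simp

lemma tmul_assoc:
  fixes u v w :: "('p::prime_card, 'x) tens"
  shows "tmul c (tmul c u v) w = tmul c u (tmul c v w)"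
proof (rule ext)
  fix s :: "'x list"
  show "tmul c (tmul c u v) w s = tmul c u (tmul c v w) s"
  proof (cases "length s \<le> c")
    case True
    then have "tmul c (tmul c u v) w s = conv (conv u v) w s"
      and "tmul c u (tmul c v w) s = conv u (conv v w) s"
      unfolding tmul_eq_conv conv_def by (auto intro!: sum.cong)
    then show ?thesis by (simp add: conv_assoc)
  qed (simp add: tmul_def)
qed

lemma tmul_diff_left: "tmul c (\<lambda>w. v w - v' w) u = (\<lambda>w. tmul c v u w - tmul c v' u w)"
  unfolding tmul_def by (auto simp: algebra_simps sum_subtractf)

lemma tmul_diff_right: "tmul c u (\<lambda>w. v w - v' w) = (\<lambda>w. tmul c u v w - tmul c u v' w)"
  unfolding tmul_def by (auto simp: algebra_simps sum_subtractf)

lemma tmul_tadd_left: "tmul c (tadd v v') u = tadd (tmul c v u) (tmul c v' u)"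
  unfolding tmul_def tadd_def by (auto simp: algebra_simps sum.distrib)

lemma tmul_tadd_right: "tmul c u (tadd v v') = tadd (tmul c u v) (tmul c u v')"
  unfolding tmul_def tadd_def by (auto simp: algebra_simps sum.distrib)

lemma tmul_tscale_left: "tmul c (tscale q v) u = tscale q (tmul c v u)"
  unfolding tmul_def tscale_def by (auto simp: algebra_simps sum_distrib_left)

lemma tmul_tscale_right: "tmul c u (tscale q v) = tscale q (tmul c u v)"
  unfolding tmul_def tscale_def by (auto simp: algebra_simps sum_distrib_left)

lemma lie_br_jacobi:
  "lie_br c a (lie_br c b e) = tadd (lie_br c (lie_br c a b) e) (lie_br c b (lie_br c a e))"
  unfolding lie_br_def tadd_def
  by (simp add: tmul_diff_right tmul_diff_left tmul_assoc algebra_simps)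

lemma lie_br_anticomm: "lie_br c u v = tscale (to_fract (-1)) (lie_br c v u)"
  unfolding lie_br_def tscale_def by simp

lemma tmul_tzero_left: "tmul c tzero u = tzero"
  unfolding tmul_def tzero_def by auto

lemma tmul_tzero_right: "tmul c u tzero = tzero"
  unfolding tmul_def tzero_def by auto

lemma lie_br_tadd_left: "lie_br c (tadd u v) w = tadd (lie_br c u w) (lie_br c v w)"
  unfolding lie_br_def by (simp add: tmul_tadd_left tmul_tadd_right) (simp add: tadd_def algebra_simps)

lemma lie_br_tadd_right: "lie_br c w (tadd u v) = tadd (lie_br c w u) (lie_br c w v)"
  unfolding lie_br_def by (simp add: tmul_tadd_left tmul_tadd_right) (simp add: tadd_def algebra_simps)

lemma lie_br_tscale_left: "lie_br c (tscale q u) w = tscale q (lie_br c u w)"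
  unfolding lie_br_def by (simp add: tmul_tscale_left tmul_tscale_right) (simp add: tscale_def algebra_simps)

lemma lie_br_tscale_right: "lie_br c w (tscale q u) = tscale q (lie_br c w u)"
  unfolding lie_br_def by (simp add: tmul_tscale_left tmul_tscale_right) (simp add: tscale_def algebra_simps)

lemma lie_br_tzero_left: "lie_br c tzero u = tzero"
  unfolding lie_br_def by (simp add: tmul_tzero_left tmul_tzero_right) (simp add: tzero_def)

lemma lie_br_tzero_right: "lie_br c u tzero = tzero"
  unfolding lie_br_def by (simp add: tmul_tzero_left tmul_tzero_right) (simp add: tzero_def)

lemma tadd_tzero_left: "tadd tzero u = u"
  unfolding tadd_def tzero_def by simp

lemma tadd_tzero_right: "tadd u tzero = u"
  unfolding tadd_def tzero_def by simp

lemma tscale_tzero: "tscale q tzero = tzero"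
  unfolding tscale_def tzero_def by simp

lemma tscale_tadd: "tscale q (tadd u v) = tadd (tscale q u) (tscale q v)"
  unfolding tscale_def tadd_def by (simp add: algebra_simps)

lemma tscale_tscale: "tscale q (tscale r u) = tscale (q * r) u"
  unfolding tscale_def by (simp add: mult.assoc)

lemma zp_span_least:
  assumes "zp_submodule T" "S \<subseteq> T" shows "zp_span S \<subseteq> T"
proof
  fix x assume "x \<in> zp_span S"
  then show "x \<in> T" by induct (use assms in \<open>auto simp: zp_submodule_def\<close>)
qed

lemma zp_submodule_zp_span: "zp_submodule (zp_span S)"
  unfolding zp_submodule_def by (auto intro: zp_span.intros)

lemma zp_submodule_tscale_image:
  assumes S: "zp_submodule S" shows "zp_submodule (tscale q ` S)"
  unfolding zp_submodule_def
proof (intro conjI ballI allI impI)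
  show "tzero \<in> tscale q ` S"
    using S imageI[of tzero S "tscale q"] by (simp add: zp_submodule_def tscale_tzero)
  fix u v assume "u \<in> tscale q ` S" "v \<in> tscale q ` S"
  then show "tadd u v \<in> tscale q ` S" using S by (auto simp: zp_submodule_def tscale_tadd[symmetric])
next
  fix a u assume "u \<in> tscale q ` S"
  then obtain v where v: "u = tscale q v" "v \<in> S" by auto
  have "tscale (to_fract a) u = tscale q (tscale (to_fract a) v)"
    unfolding v tscale_tscale by (simp add: mult.commute)
  then show "tscale (to_fract a) u \<in> tscale q ` S" using S v by (auto simp: zp_submodule_def)
qed

lemma lie_br_zp_span_right:
  assumes T: "zp_submodule T" and y: "y \<in> zp_span S"
    and gen: "\<And>s. s \<in> S \<Longrightarrow> lie_br c x s \<in> T"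
  shows "lie_br c x y \<in> T"
  using y
proof induct
  case zero then show ?case using T by (simp add: lie_br_tzero_right zp_submodule_def)
next
  case (base s) then show ?case by (rule gen)
next
  case (add u v) then show ?case using T by (simp add: lie_br_tadd_right zp_submodule_def)
next
  case (smul u a) then show ?case using T by (simp add: lie_br_tscale_right zp_submodule_def)
qed

lemma zp_submodule_bracket_set: "zp_submodule (bracket_set c A B)"
  unfolding bracket_set_def by (rule zp_submodule_zp_span)

lemma lie_br_in_bracket_set: "a \<in> A \<Longrightarrow> b \<in> B \<Longrightarrow> lie_br c a b \<in> bracket_set c A B"
  unfolding bracket_set_def by (auto intro: zp_span.base)

lemma bracket_set_least:
  assumes "zp_submodule T" "\<And>a b. a \<in> A \<Longrightarrow> b \<in> B \<Longrightarrow> lie_br c a b \<in> T"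
  shows "bracket_set c A B \<subseteq> T"
  unfolding bracket_set_def by (rule zp_span_least) (use assms in auto)

lemma bracket_set_mono_left: "A \<subseteq> A' \<Longrightarrow> bracket_set c A B \<subseteq> bracket_set c A' B"
  by (rule bracket_set_least[OF zp_submodule_bracket_set]) (auto intro: lie_br_in_bracket_set)

lemma iter_bracket_mono_left: "I \<subseteq> L \<Longrightarrow> iter_bracket c I L i \<subseteq> iter_bracket c L L i"
  by (induct i) (auto intro!: bracket_set_mono_left)

lemma zp_submodule_iter_bracket: "zp_submodule I \<Longrightarrow> zp_submodule (iter_bracket c I L i)"
  by (cases i) (auto simp: zp_submodule_bracket_set)

lemma lie_br_iter_bracket:
  "x \<in> iter_bracket c I L i \<Longrightarrow> y \<in> iter_bracket c L L j
     \<Longrightarrow> lie_br c x y \<in> iter_bracket c I L (Suc (i + j))"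
proof (induct j arbitrary: i x y)
  case 0 then show ?case by (auto intro: lie_br_in_bracket_set)
next
  case (Suc j i x y)
  let ?T = "iter_bracket c I L (Suc (i + Suc j))"
  have T: "zp_submodule ?T" by (simp add: zp_submodule_bracket_set)
  have "y \<in> zp_span {lie_br c a b | a b. a \<in> iter_bracket c L L j \<and> b \<in> L}"
    using Suc.prems(2) by (simp add: bracket_set_def)
  then show ?case
  proof (rule lie_br_zp_span_right[OF T])
    fix s assume "s \<in> {lie_br c a b | a b. a \<in> iter_bracket c L L j \<and> b \<in> L}"
    then obtain g l where s: "s = lie_br c g l" and g: "g \<in> iter_bracket c L L j" and l: "l \<in> L"
      by auto
    have xg_l: "lie_br c (lie_br c x g) l \<in> ?T"
      using Suc.hyps[OF Suc.prems(1) g] l by (auto intro: lie_br_in_bracket_set)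
    have "lie_br c x l \<in> iter_bracket c I L (Suc i)"
      using Suc.prems(1) l by (auto intro: lie_br_in_bracket_set)
    from Suc.hyps[OF this g] have "lie_br c (lie_br c x l) g \<in> ?T" by simp
    then have g_xl: "lie_br c g (lie_br c x l) \<in> ?T"
      using T unfolding zp_submodule_def by (subst lie_br_anticomm) blast
    show "lie_br c x s \<in> ?T"
      unfolding s lie_br_jacobi[of c x g l] using xg_l g_xl T unfolding zp_submodule_def by blast
  qed
qed

definition supported_in_degrees :: "nat \<Rightarrow> nat \<Rightarrow> ('p::prime_card, 'x) tens \<Rightarrow> bool" where
  "supported_in_degrees c k u \<longleftrightarrow> (\<forall>w. length w < k \<or> c < length w \<longrightarrow> u w = 0)"

lemma zp_submodule_supported_in_degrees: "zp_submodule {u. supported_in_degrees c k u}"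
  unfolding zp_submodule_def supported_in_degrees_def tzero_def tadd_def tscale_def by auto

lemma supported_in_degrees_above_zero:
  assumes "supported_in_degrees c k u" "c < k" shows "u = tzero"
  using assms unfolding supported_in_degrees_def tzero_def by force

lemma tmul_supported_in_degrees:
  fixes u v :: "('p::prime_card, 'x) tens"
  assumes u: "supported_in_degrees c a u" and v: "supported_in_degrees c b v"
  shows "supported_in_degrees c (a + b) (tmul c u v)"
  unfolding supported_in_degrees_def
proof (intro allI impI)
  fix w :: "'x list" assume w: "length w < a + b \<or> c < length w"
  have "u (take i w) * v (drop i w) = 0" if "i \<le> length w" "length w < a + b" for i
    using u v that unfolding supported_in_degrees_def by (cases "i < a") (auto simp: min_def)
  then show "tmul c u v w = 0" using w unfolding tmul_def by (auto intro!: sum.neutral)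
qed

lemma lie_br_supported_in_degrees:
  "supported_in_degrees c a u \<Longrightarrow> supported_in_degrees c b v
     \<Longrightarrow> supported_in_degrees c (a + b) (lie_br c u v)"
  using tmul_supported_in_degrees[of c a u b v] tmul_supported_in_degrees[of c b v a u]
  unfolding supported_in_degrees_def lie_br_def by (simp add: add.commute)

lemma free_nil_lie_supported_in_degrees:
  assumes "0 < c" "u \<in> free_nil_lie c X" shows "supported_in_degrees c 1 u"
  using assms(2)
proof induct
  case (br u v)
  then have "supported_in_degrees c (1 + 1) (lie_br c u v)"
    by (intro lie_br_supported_in_degrees)
  then show ?case unfolding supported_in_degrees_def by auto
qed (use assms(1) in \<open>auto simp: supported_in_degrees_def tgen_def tzero_def tadd_def tscale_def\<close>)

lemma iter_bracket_supported_in_degrees: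
  fixes I :: "('p::prime_card, 'x) tens set"
  assumes "0 < c" "I \<subseteq> free_nil_lie c X" "u \<in> iter_bracket c I (free_nil_lie c X) i"
  shows "supported_in_degrees c (Suc i) u"
  using assms(3)
proof (induct i arbitrary: u)
  case 0 then show ?case using assms free_nil_lie_supported_in_degrees by auto
next
  case (Suc i)
  have "bracket_set c (iter_bracket c I (free_nil_lie c X) i) (free_nil_lie c X)
          \<subseteq> {u. supported_in_degrees c (Suc i + 1) u}"
  proof (rule bracket_set_least[OF zp_submodule_supported_in_degrees], simp only: mem_Collect_eq)
    fix a b :: "('p, 'x) tens"
    assume "a \<in> iter_bracket c I (free_nil_lie c X) i" "b \<in> free_nil_lie c X"
    then show "supported_in_degrees c (Suc i + 1) (lie_br c a b)"
      using Suc.hyps free_nil_lie_supported_in_degrees[OF assms(1)]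
      by (blast intro: lie_br_supported_in_degrees)
  qed
  then show ?case using Suc.prems by auto
qed

lemma tzero_in_sum_sets: "(\<And>i. i < n \<Longrightarrow> tzero \<in> F i) \<Longrightarrow> tzero \<in> sum_sets F n"
  by (induct n) (auto simp: set_add_def tadd_tzero_left intro!: exI[of _ tzero])

lemma sum_sets_mono: "(\<And>i. i < n \<Longrightarrow> F i \<subseteq> G i) \<Longrightarrow> sum_sets F n \<subseteq> sum_sets G n"
  by (induct n) (auto simp: set_add_def, blast)

lemma subset_sum_sets:
  assumes "\<And>i. i < n \<Longrightarrow> tzero \<in> F i" "k < n"
  shows "F k \<subseteq> sum_sets F n"
  using assms
proof (induct n)
  case (Suc n)
  show ?case
  proof
    fix x assume x: "x \<in> F k"
    show "x \<in> sum_sets F (Suc n)"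
    proof (cases "k = n")
      case True
      have "x = tadd tzero x" by (simp add: tadd_tzero_left)
      then show ?thesis using x True tzero_in_sum_sets[of n F] Suc.prems(1)
        by (auto simp: set_add_def)
    next
      case False
      then have "x \<in> sum_sets F n" using Suc x by auto
      moreover have "x = tadd x tzero" by (simp add: tadd_tzero_right)
      ultimately show ?thesis using Suc.prems(1)[of n] by (auto simp: set_add_def)
    qed
  qed
qed simp

lemma zp_submodule_set_add:
  assumes A: "zp_submodule A" and B: "zp_submodule B" shows "zp_submodule (set_add A B)"
  unfolding zp_submodule_def set_add_def
proof (intro conjI allI impI ballI)
  show "tzero \<in> {tadd a b |a b. a \<in> A \<and> b \<in> B}"
    using A B by (auto simp: zp_submodule_def tadd_tzero_left intro!: exI[of _ tzero])
next
  fix u v assume "u \<in> {tadd a b |a b. a \<in> A \<and> b \<in> B}" "v \<in> {tadd a b |a b. a \<in> A \<and> b \<in> B}"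
  then obtain a b a' b' where u: "u = tadd a b" "a \<in> A" "b \<in> B"
    and v: "v = tadd a' b'" "a' \<in> A" "b' \<in> B" by auto
  have "tadd u v = tadd (tadd a a') (tadd b b')"
    unfolding u v tadd_def by (simp add: algebra_simps)
  moreover have "tadd a a' \<in> A" "tadd b b' \<in> B" using A B u v by (auto simp: zp_submodule_def)
  ultimately show "tadd u v \<in> {tadd a b |a b. a \<in> A \<and> b \<in> B}" by blast
next
  fix q u assume "u \<in> {tadd a b |a b. a \<in> A \<and> b \<in> B}"
  then obtain a b where u: "u = tadd a b" "a \<in> A" "b \<in> B" by auto
  have "tscale (to_fract q) u = tadd (tscale (to_fract q) a) (tscale (to_fract q) b)"
    unfolding u by (rule tscale_tadd)
  moreover have "tscale (to_fract q) a \<in> A" "tscale (to_fract q) b \<in> B"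
    using A B u by (auto simp: zp_submodule_def)
  ultimately show "tscale (to_fract q) u \<in> {tadd a b |a b. a \<in> A \<and> b \<in> B}" by blast
qed

lemma zp_submodule_sum_sets:
  "(\<And>i. i < n \<Longrightarrow> zp_submodule (F i)) \<Longrightarrow> zp_submodule (sum_sets F n)"
proof (induct n)
  case 0 then show ?case by (simp add: zp_submodule_def tadd_tzero_left tscale_tzero)
next
  case (Suc n) then show ?case by (simp add: zp_submodule_set_add)
qed

lemma lie_br_sum_sets_right:
  assumes T: "zp_submodule T"
  shows "b \<in> sum_sets G m \<Longrightarrow> \<forall>j<m. \<forall>y\<in>G j. lie_br c x y \<in> T \<Longrightarrow> lie_br c x b \<in> T"
proof (induct m arbitrary: b)
  case 0 then show ?case using T by (simp add: lie_br_tzero_right zp_submodule_def)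
next
  case (Suc m)
  then obtain b' y where b: "b = tadd b' y" "b' \<in> sum_sets G m" "y \<in> G m"
    by (auto simp: set_add_def)
  have "lie_br c x b' \<in> T"
    by (rule Suc.hyps[OF b(2)]) (use Suc.prems(2) less_SucI in blast)
  moreover have "lie_br c x y \<in> T" using Suc.prems b by auto
  ultimately show ?case using T b by (simp add: lie_br_tadd_right zp_submodule_def)
qed

lemma lie_br_sum_sets:
  assumes T: "zp_submodule T"
  shows "a \<in> sum_sets F n \<Longrightarrow> b \<in> sum_sets G m \<Longrightarrow>
    \<forall>i<n. \<forall>j<m. \<forall>x\<in>F i. \<forall>y\<in>G j. lie_br c x y \<in> T \<Longrightarrow> lie_br c a b \<in> T"
proof (induct n arbitrary: a)
  case 0 then show ?case using T by (simp add: lie_br_tzero_left zp_submodule_def)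
next
  case (Suc n)
  then obtain a' x where a: "a = tadd a' x" "a' \<in> sum_sets F n" "x \<in> F n"
    by (auto simp: set_add_def)
  have "lie_br c a' b \<in> T"
    by (rule Suc.hyps[OF a(2) Suc.prems(2)]) (use Suc.prems(3) less_SucI in blast)
  moreover have "lie_br c x b \<in> T"
    by (rule lie_br_sum_sets_right[OF T]) (use Suc.prems a in auto)
  ultimately show ?case using T a by (simp add: lie_br_tadd_left zp_submodule_def)
qed

lemma prime_p_eq_to_fract: "(prime_p :: 'p::prime_card padic) = to_fract (of_nat CARD('p))"
  unfolding prime_p_def to_fract_def by (rule of_nat_fract)

lemma prime_p_nonzero: "(prime_p :: 'p::prime_card padic) \<noteq> 0"
proof -
  have of_nat_rep: "Rep_padic_int (of_nat k :: 'p padic_int) = (\<lambda>n. int k mod int CARD('p) ^ n)"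
    for k
    by (induct k) (simp_all add: zero_padic_int.rep_eq plus_padic_int.rep_eq
        one_padic_int.rep_eq mod_add_eq add.commute)
  have p: "1 < int CARD('p)" using nontriv by simp
  then have "int CARD('p) < int CARD('p) ^ 2" by (simp add: power2_eq_square)
  then have "Rep_padic_int (of_nat CARD('p) :: 'p padic_int) 2 \<noteq> Rep_padic_int 0 2"
    using p by (simp add: of_nat_rep zero_padic_int.rep_eq)
  then have "(of_nat CARD('p) :: 'p padic_int) \<noteq> 0" by metis
  then show ?thesis by (simp add: prime_p_eq_to_fract)
qed

lemma tscale_prime_p_subset:
  "zp_submodule S \<Longrightarrow> tscale prime_p ` S \<subseteq> S"
  unfolding prime_p_eq_to_fract zp_submodule_def by blast

lemma zp_submodule_hat_ideal:
  "zp_submodule I \<Longrightarrow> zp_submodule (hat_ideal c L I)"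
  unfolding hat_ideal_def
  by (intro zp_submodule_sum_sets zp_submodule_tscale_image zp_submodule_iter_bracket)

lemma hat_ideal_subset_hat_L: "I \<subseteq> L \<Longrightarrow> hat_ideal c L I \<subseteq> hat_L c L"
  unfolding hat_ideal_def hat_L_def gamma_def
  by (auto intro!: sum_sets_mono image_mono iter_bracket_mono_left)

lemma lie_br_hat_summands:
  fixes I :: "('p::prime_card, 'x) tens set"
  assumes "0 < c" "I \<subseteq> free_nil_lie c X" "zp_submodule I" "i < c"
    and x: "x \<in> iter_bracket c I (free_nil_lie c X) i"
    and y: "y \<in> iter_bracket c (free_nil_lie c X) (free_nil_lie c X) j"
  shows "lie_br c (tscale (inverse (prime_p ^ i)) x) (tscale (inverse (prime_p ^ j)) y)
           \<in> tscale prime_p ` hat_ideal c (free_nil_lie c X) I"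
proof -
  let ?L = "free_nil_lie c X" and ?p = "prime_p :: 'p padic"
  define z where "z = lie_br c x y"
  have z: "z \<in> iter_bracket c I ?L (Suc (i + j))"
    unfolding z_def using x y by (rule lie_br_iter_bracket)
  have xy: "lie_br c (tscale (inverse (?p ^ i)) x) (tscale (inverse (?p ^ j)) y)
              = tscale (inverse (?p ^ i) * inverse (?p ^ j)) z"
    unfolding z_def lie_br_tscale_left lie_br_tscale_right tscale_tscale by (simp add: mult.commute)
  have hat: "zp_submodule (hat_ideal c ?L I)" by (rule zp_submodule_hat_ideal) fact
  show ?thesis
  proof (cases "Suc (i + j) < c")
    case True
    have "zp_submodule (tscale q ` iter_bracket c I ?L k)" for q k
      using \<open>zp_submodule I\<close> by (intro zp_submodule_tscale_image zp_submodule_iter_bracket)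
    then have "tscale (inverse (?p ^ Suc (i + j))) ` iter_bracket c I ?L (Suc (i + j))
                 \<subseteq> hat_ideal c ?L I"
      unfolding hat_ideal_def using True by (intro subset_sum_sets) (auto simp: zp_submodule_def)
    with z have "tscale (inverse (?p ^ Suc (i + j))) z \<in> hat_ideal c ?L I" by blast
    moreover have "tscale (inverse (?p ^ i) * inverse (?p ^ j)) z
                     = tscale ?p (tscale (inverse (?p ^ Suc (i + j))) z)"
      unfolding tscale_tscale using prime_p_nonzero[where 'p='p] by (simp add: power_add field_simps)
    ultimately show ?thesis unfolding xy by blast
  next
    case False
    have "supported_in_degrees c (Suc (Suc (i + j))) z"
      using iter_bracket_supported_in_degrees assms(1,2) z by blast
    then have "z = tzero" by (rule supported_in_degrees_above_zero) (use False in simp)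
    moreover have "tzero \<in> hat_ideal c ?L I" using hat by (simp add: zp_submodule_def)
    ultimately show ?thesis unfolding xy using tscale_tzero by (metis image_eqI)
  qed
qed

lemma bracket_hat_ideal_hat_L:
  fixes I :: "('p::prime_card, 'x) tens set"
  assumes "0 < c" "I \<subseteq> free_nil_lie c X" "zp_submodule I"
  shows "bracket_set c (hat_ideal c (free_nil_lie c X) I) (hat_L c (free_nil_lie c X))
           \<subseteq> tscale prime_p ` hat_ideal c (free_nil_lie c X) I"
proof (rule bracket_set_least)
  show T: "zp_submodule (tscale prime_p ` hat_ideal c (free_nil_lie c X) I)"
    using assms(3) by (intro zp_submodule_tscale_image zp_submodule_hat_ideal)
  fix a b :: "('p, 'x) tens"
  assume "a \<in> hat_ideal c (free_nil_lie c X) I" "b \<in> hat_L c (free_nil_lie c X)"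
  then show "lie_br c a b \<in> tscale prime_p ` hat_ideal c (free_nil_lie c X) I"
    unfolding hat_ideal_def hat_L_def gamma_def diff_Suc_1
    by (rule lie_br_sum_sets[OF T[unfolded hat_ideal_def]]) (auto intro: lie_br_hat_summands[OF assms, unfolded hat_ideal_def])
qed

theorem lemma3p3:
  fixes c d :: nat and X :: "'x set" and I :: "('p::prime_card, 'x) tens set"
  assumes "0 < c" and "0 < d" and "finite X" and "card X = d"
    and "lie_ideal c (free_nil_lie c X) I"
    and "finite_index (free_nil_lie c X) I"
  shows "bracket_set c (hat_ideal c (free_nil_lie c X) I) (hat_L c (free_nil_lie c X))
           \<subseteq> tscale prime_p ` hat_ideal c (free_nil_lie c X) I
         \<and> lie_ideal c (hat_L c (free_nil_lie c X)) (hat_ideal c (free_nil_lie c X) I)"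
proof -
  have IL: "I \<subseteq> free_nil_lie c X" and I: "zp_submodule I"
    using assms(5) unfolding lie_ideal_def by auto
  have br: "bracket_set c (hat_ideal c (free_nil_lie c X) I) (hat_L c (free_nil_lie c X))
              \<subseteq> tscale prime_p ` hat_ideal c (free_nil_lie c X) I"
    using assms(1) IL I by (rule bracket_hat_ideal_hat_L)
  moreover have "hat_ideal c (free_nil_lie c X) I \<subseteq> hat_L c (free_nil_lie c X)"
    using IL by (rule hat_ideal_subset_hat_L)
  moreover have "zp_submodule (hat_ideal c (free_nil_lie c X) I)"
    using I by (rule zp_submodule_hat_ideal)
  ultimately show ?thesis
    unfolding lie_ideal_def using tscale_prime_p_subset by blast
qed

end
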